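(* Let $E$ be a real Banach space which is uniformly convex with modulus $\delta_E$, and let $d>0$. Let $A\subset E$ be a nonempty closed set which is weakly convex with modulus of nonconvexity $\gamma_A(\varepsilon)$, $\varepsilon\in[0,2d)$, with $d\,\delta_E(\varepsilon/d)>\gamma_A(\varepsilon)$ for all $\varepsilon\in(0,2d)$, and suppose condition (i) holds for $\delta(t)=d\,\delta_E(t/d)$ and $\gamma=\gamma_A$. Suppose further that $A\subset B_r(a)$ for some $a\in E$ and $r>0$ with $2r<d$, and that $\gamma_A(\varepsilon)<d\,\delta_E(\varepsilon/d)$ for all $\varepsilon\in(0,\operatorname{diam}A)$. Then $A$ is a continuous retract of $E$, i.e. there is a continuous map $\phi:E\to A$ with $\phi(x)=x$ for all $x\in A$.
   Context: $B_r(a)$ is the closed ball. $\delta_E(\varepsilon)=\sup\{\delta\ge0: B_\delta(\frac{x_1+x_2}{2})\subset B_1(0)\ \forall x_1,x_2\in B_1(0),\ \|x_1-x_2\|=\varepsilon\}$ on $[0,2)$; $E$ uniformly convex means $\delta_E>0$ on $(0,2)$. For closed $A$ and $\varepsilon>0$, $\gamma^0_A(\varepsilon)=\inf\{\gamma>0: B_\gamma(\frac{x_1+x_2}{2})\cap A\ne\emptyset\ \forall x_1,x_2\in A,\ \|x_1-x_2\|\le\varepsilon\}$; modulus of nonconvexity $\gamma_A(0)=0$, $\gamma_A(\varepsilon)=\lim_{\tau\downarrow\varepsilon}\gamma^0_A(\tau)$. $A$ is weakly convex with modulus $\gamma_A$ on $[0,d')$ if $\gamma_A(\varepsilon)<\varepsilon/2$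 for $\varepsilon\in(0,d')$. Condition (i) for moduli $\delta,\gamma$: there is $s_0>0$ such that for every $s\in(0,s_0]$: (1) there is $t_s>s$ with $\delta(t_s-s)=\gamma(t_s)$; (2) $t\mapsto\delta(t-s)-\gamma(t)$ is positive and increasing for $t>t_s$; (3) there is $t(s)>t_s$ with $\delta(t(s)-s)-\gamma(t(s))=s/2$. *)

theory Defs
  imports "HOL-Analysis.Analysis"
begin

definition mod_conv :: "'a::real_normed_vector itself \<Rightarrow> real \<Rightarrow> real" where
  "mod_conv _ \<epsilon> = Sup {\<delta>. \<delta> \<ge> 0 \<and>
      (\<forall>x1 x2::'a. x1 \<in> cball 0 1 \<and> x2 \<in> cball 0 1 \<and> norm (x1 - x2) = \<epsilon> \<longrightarrow>
          cball ((1/2) *\<^sub>R (x1 + x2)) \<delta> \<subseteq> cball 0 1)}"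

definition uniformly_convex_space :: "'a::real_normed_vector itself \<Rightarrow> bool" where
  "uniformly_convex_space T \<longleftrightarrow> (\<forall>\<epsilon>. 0 < \<epsilon> \<and> \<epsilon> < 2 \<longrightarrow> mod_conv T \<epsilon> > 0)"

definition mod_nonconv0 :: "'a::real_normed_vector set \<Rightarrow> real \<Rightarrow> real" where
  "mod_nonconv0 A \<epsilon> = Inf {\<gamma>. \<gamma> > 0 \<and>
      (\<forall>x1\<in>A. \<forall>x2\<in>A. norm (x1 - x2) \<le> \<epsilon> \<longrightarrow> cball ((1/2) *\<^sub>R (x1 + x2)) \<gamma> \<inter> A \<noteq> {})}"

definition mod_nonconv :: "'a::real_normed_vector set \<Rightarrow> real \<Rightarrow> real" where
  "mod_nonconv A \<epsilon> = (if \<epsilon> = 0 then 0 else Lim (at_right \<epsilon>) (mod_nonconv0 A))"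

definition weakly_convex_on :: "'a::real_normed_vector set \<Rightarrow> real \<Rightarrow> bool" where
  "weakly_convex_on A d' \<longleftrightarrow> (\<forall>\<epsilon>. 0 < \<epsilon> \<and> \<epsilon> < d' \<longrightarrow> mod_nonconv A \<epsilon> < \<epsilon> / 2)"

definition condition_i :: "(real \<Rightarrow> real) \<Rightarrow> (real \<Rightarrow> real) \<Rightarrow> real \<Rightarrow> bool" where
  "condition_i \<delta> \<gamma> D \<longleftrightarrow> (\<exists>s0>0. \<forall>s. 0 < s \<and> s \<le> s0 \<longrightarrow>
     (\<exists>ts. s < ts \<and> ts < D \<and> \<delta> (ts - s) = \<gamma> ts \<and>
        (\<forall>t. ts < t \<and> t < D \<longrightarrow> \<delta> (t - s) - \<gamma> t > 0) \<and>
        (\<forall>t1 t2. ts < t1 \<and> t1 < t2 \<and> t2 < D \<longrightarrow> \<delta> (t1 - s) - \<gamma> t1 < \<delta> (t2 - s) - \<gamma> t2) \<and>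
        (\<exists>t. ts < t \<and> t < D \<and> \<delta> (t - s) - \<gamma> t = s / 2)))"

end

theory Submission
  imports Defs
begin

text \<open>If p, p' are points of A within distance R of x, uniform convexity pushes their midpoint
  d \<delta>(\<parallel>p - p'\<parallel>/d) deeper into the ball B_R(x), and weak convexity returns a point of A within
  \<gamma>(\<parallel>p - p'\<parallel>) of that midpoint. Hence the gap d \<delta>(\<epsilon>/d) - \<gamma>(\<epsilon>) at \<epsilon> = \<parallel>p - p'\<parallel> is at most
  R - dist(x, A). The gap is lower semicontinuous and positive, so it is bounded below on every
  compact interval [\<epsilon>0, 2r]; therefore almost nearest points in A to x are uniformly close to each
  other whenever x \<in> B_r(a). In a Banach space this makes the metric projection onto A well defined
  and continuous on B_r(a), and composing it with the radial retraction onto B_r(a) retracts E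
  onto A.\<close>

section \<open>Modulus of convexity\<close>

definition convexity_radii :: "'a::real_normed_vector itself \<Rightarrow> real \<Rightarrow> real set" where
  "convexity_radii T \<epsilon> = {\<delta>. \<delta> \<ge> 0 \<and>
      (\<forall>x1 x2::'a. x1 \<in> cball 0 1 \<and> x2 \<in> cball 0 1 \<and> norm (x1 - x2) = \<epsilon> \<longrightarrow>
          cball ((1/2) *\<^sub>R (x1 + x2)) \<delta> \<subseteq> cball 0 1)}"

lemma mod_conv_eq_Sup: "mod_conv T \<epsilon> = Sup (convexity_radii T \<epsilon>)"
  by (simp add: mod_conv_def convexity_radii_def)

lemma norm_half_sum_le: "norm ((1/2) *\<^sub>R (x + y)) \<le> (norm x + norm y) / 2"
  using norm_triangle_ineq[of x y] by simp

lemma norm_diff_add_le_of_cball_subset: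
  fixes m c :: "'a::real_normed_vector"
  assumes nontriv: "\<exists>u::'a. u \<noteq> 0" and sub: "cball m \<delta> \<subseteq> cball c R" and "\<delta> \<ge> 0"
  shows "norm (m - c) + \<delta> \<le> R"
proof -
  obtain u :: 'a where "u \<noteq> 0" using nontriv by blast
  define v where "v = (if m = c then sgn u else sgn (m - c))"
  have nv: "norm v = 1" using \<open>u \<noteq> 0\<close> by (auto simp: v_def norm_sgn)
  have "dist m (m + \<delta> *\<^sub>R v) \<le> \<delta>" using nv \<open>\<delta> \<ge> 0\<close> by (simp add: dist_norm)
  then have "dist c (m + \<delta> *\<^sub>R v) \<le> R" using sub by (meson mem_cball subsetD)
  then have "norm (m + \<delta> *\<^sub>R v - c) \<le> R" by (simp add: dist_norm norm_minus_commute)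
  moreover have "m + \<delta> *\<^sub>R v - c = (norm (m - c) + \<delta>) *\<^sub>R v"
    by (cases "m = c") (auto simp: v_def sgn_div_norm algebra_simps)
  ultimately show ?thesis using nv \<open>\<delta> \<ge> 0\<close> by simp
qed

lemma mod_conv_midpoint_le:
  fixes x1 x2 :: "'a::real_normed_vector"
  assumes nontriv: "\<exists>u::'a. u \<noteq> 0" and "norm x1 \<le> 1" "norm x2 \<le> 1" "norm (x1 - x2) = \<epsilon>"
  shows "norm ((1/2) *\<^sub>R (x1 + x2)) \<le> 1 - mod_conv TYPE('a) \<epsilon>"
proof -
  have "norm ((1/2) *\<^sub>R (y1 + y2)) \<le> 1" if "norm y1 \<le> 1" "norm y2 \<le> 1" for y1 y2 :: 'a
    using norm_half_sum_le[of y1 y2] that by simp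
  then have "0 \<in> convexity_radii TYPE('a) \<epsilon>" by (auto simp: convexity_radii_def dist_norm)
  moreover have "\<delta> \<le> 1 - norm ((1/2) *\<^sub>R (x1 + x2))" if "\<delta> \<in> convexity_radii TYPE('a) \<epsilon>" for \<delta>
    using norm_diff_add_le_of_cball_subset[OF nontriv, of "(1/2) *\<^sub>R (x1 + x2)" \<delta> 0 1]
      that assms by (auto simp: convexity_radii_def)
  ultimately have "Sup (convexity_radii TYPE('a) \<epsilon>) \<le> 1 - norm ((1/2) *\<^sub>R (x1 + x2))"
    by (intro cSup_least) auto
  then show ?thesis unfolding mod_conv_eq_Sup by simp
qed

lemma mod_conv_greatest:
  fixes T :: "'a::real_normed_vector itself"
  assumes nontriv: "\<exists>u::'a. u \<noteq> 0" and "v \<ge> 0" "0 \<le> \<epsilon>" "\<epsilon> \<le> 2"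
    and mid: "\<And>x1 x2::'a. norm x1 \<le> 1 \<Longrightarrow> norm x2 \<le> 1 \<Longrightarrow> norm (x1 - x2) = \<epsilon> \<Longrightarrow>
              norm ((1/2) *\<^sub>R (x1 + x2)) + v \<le> 1"
  shows "v \<le> mod_conv TYPE('a) \<epsilon>"
proof -
  obtain u :: 'a where "u \<noteq> 0" using nontriv by blast
  \<comment> \<open>a pair at distance \<epsilon> with midpoint 0 shows that every radius is at most 1\<close>
  have "bdd_above (convexity_radii TYPE('a) \<epsilon>)"
  proof (rule bdd_aboveI)
    fix \<delta> assume "\<delta> \<in> convexity_radii TYPE('a) \<epsilon>"
    define y where "y = (\<epsilon>/2) *\<^sub>R sgn u"
    have "y - - y = \<epsilon> *\<^sub>R sgn u" by (simp add: y_def flip: scaleR_add_left)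
    then have "norm y \<le> 1" "norm (- y) \<le> 1" "norm (y - - y) = \<epsilon>"
      using \<open>u \<noteq> 0\<close> assms(3,4) by (simp_all add: y_def norm_sgn)
    with \<open>\<delta> \<in> convexity_radii TYPE('a) \<epsilon>\<close> have "cball ((1/2) *\<^sub>R (y + - y)) \<delta> \<subseteq> cball 0 1" "\<delta> \<ge> 0"
      unfolding convexity_radii_def mem_Collect_eq mem_cball_0 by blast+
    from norm_diff_add_le_of_cball_subset[OF nontriv this] show "\<delta> \<le> 1" by simp
  qed
  moreover have "v \<in> convexity_radii TYPE('a) \<epsilon>"
  proof -
    have "cball ((1/2) *\<^sub>R (x1 + x2)) v \<subseteq> cball 0 1"
      if "norm x1 \<le> 1" "norm x2 \<le> 1" "norm (x1 - x2) = \<epsilon>" for x1 x2 :: 'a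
    proof
      fix z assume "z \<in> cball ((1/2) *\<^sub>R (x1 + x2)) v"
      moreover have "norm z \<le> norm ((1/2) *\<^sub>R (x1 + x2)) + norm (z - (1/2) *\<^sub>R (x1 + x2))"
        by (metis add.commute diff_add_cancel norm_triangle_ineq)
      ultimately show "z \<in> cball 0 1"
        using mid[OF that] by (simp add: dist_norm norm_minus_commute)
    qed
    then show ?thesis using \<open>v \<ge> 0\<close> by (auto simp: convexity_radii_def)
  qed
  ultimately show ?thesis unfolding mod_conv_eq_Sup by (simp add: cSup_upper)
qed

lemma mod_conv_nonneg:
  assumes "\<exists>u::'a::real_normed_vector. u \<noteq> 0" "0 \<le> \<epsilon>" "\<epsilon> \<le> 2"
  shows "0 \<le> mod_conv TYPE('a) \<epsilon>"
proof (rule mod_conv_greatest[OF assms(1) order_refl assms(2,3)])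
  fix x1 x2 :: 'a assume "norm x1 \<le> 1" "norm x2 \<le> 1"
  then show "norm ((1/2) *\<^sub>R (x1 + x2)) + 0 \<le> 1" using norm_half_sum_le[of x1 x2] by simp
qed

lemma mod_conv_mono:
  assumes nontriv: "\<exists>u::'a::real_normed_vector. u \<noteq> 0" and "0 \<le> e1" "e1 \<le> e2" "e2 \<le> 2"
  shows "mod_conv TYPE('a) e1 \<le> mod_conv TYPE('a) e2"
proof (rule mod_conv_greatest[OF nontriv mod_conv_nonneg[OF nontriv]])
  fix x1 x2 :: 'a assume x: "norm x1 \<le> 1" "norm x2 \<le> 1" "norm (x1 - x2) = e2"
  define t where "t = (if e2 = 0 then 0 else (e2 - e1) / (2 * e2))"
  have t: "0 \<le> t" "t \<le> 1" "0 \<le> 1 - t - t" "(1 - t - t) * e2 = e1"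
    using assms by (auto simp: t_def field_simps)
  \<comment> \<open>moving x1 and x2 towards each other keeps their midpoint and shrinks their distance to e1\<close>
  define y1 where "y1 = (1 - t) *\<^sub>R x1 + t *\<^sub>R x2"
  define y2 where "y2 = t *\<^sub>R x1 + (1 - t) *\<^sub>R x2"
  have "norm y1 \<le> 1" "norm y2 \<le> 1"
    using convexD[OF convex_cball, of x1 0 1 x2 "1 - t" t] convexD[OF convex_cball, of x1 0 1 x2 t "1 - t"]
      x t by (auto simp: y1_def y2_def)
  moreover have "y1 - y2 = ((1 - t) - t) *\<^sub>R x1 - ((1 - t) - t) *\<^sub>R x2"
    unfolding y1_def y2_def by (simp only: scaleR_diff_left) (simp add: algebra_simps)
  then have "y1 - y2 = (1 - t - t) *\<^sub>R (x1 - x2)" by (simp add: scaleR_diff_right)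
  then have "norm (y1 - y2) = e1" using x t by (simp add: abs_of_nonneg)
  moreover have "y1 + y2 = x1 + x2" by (simp add: y1_def y2_def algebra_simps)
  ultimately show "norm ((1/2) *\<^sub>R (x1 + x2)) + mod_conv TYPE('a) e1 \<le> 1"
    using mod_conv_midpoint_le[OF nontriv, of y1 y2 e1] by simp
qed (use assms in auto)

lemma mod_conv_midpoint_le_stretched:
  fixes x1 x2 :: "'a::real_normed_vector"
  assumes nontriv: "\<exists>u::'a. u \<noteq> 0" and x: "norm x1 \<le> 1" "norm x2 \<le> 1" and "0 \<le> \<mu>" "\<mu> \<le> 1"
  shows "(1 - \<mu>) * norm ((1/2) *\<^sub>R (x1 + x2))
    \<le> 1 - mod_conv TYPE('a) ((1 - \<mu>) * norm (x1 - x2) + 2 * \<mu>)"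
proof -
  obtain u :: 'a where "u \<noteq> 0" using nontriv by blast
  define w where "w = (if x1 = x2 then sgn u else sgn (x2 - x1))"
  have nw: "norm w = 1" using \<open>u \<noteq> 0\<close> by (auto simp: w_def norm_sgn)
  have xw: "x2 - x1 = norm (x1 - x2) *\<^sub>R w"
    by (cases "x1 = x2") (auto simp: w_def sgn_div_norm norm_minus_commute)
  \<comment> \<open>contracting by 1 - \<mu> and pushing apart along x2 - x1 stretches the distance
    and scales the midpoint by 1 - \<mu>\<close>
  define y1 where "y1 = (1 - \<mu>) *\<^sub>R x1 - \<mu> *\<^sub>R w"
  define y2 where "y2 = (1 - \<mu>) *\<^sub>R x2 + \<mu> *\<^sub>R w"
  have ny: "norm y1 \<le> 1" "norm y2 \<le> 1"
    using convexD[OF convex_cball, of x1 0 1 "- w" "1 - \<mu>" \<mu>] convexD[OF convex_cball, of x2 0 1 w "1 - \<mu>" \<mu>]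
      x assms(4,5) nw by (auto simp: y1_def y2_def)
  have "(2 * \<mu>) *\<^sub>R w = \<mu> *\<^sub>R w + \<mu> *\<^sub>R w" by (metis scaleR_add_left mult_2)
  then have "y2 - y1 = (1 - \<mu>) *\<^sub>R (x2 - x1) + (2 * \<mu>) *\<^sub>R w"
    by (simp add: y1_def y2_def algebra_simps)
  also have "\<dots> = ((1 - \<mu>) * norm (x1 - x2) + 2 * \<mu>) *\<^sub>R w" by (simp add: xw algebra_simps)
  finally have "norm (y2 - y1) = (1 - \<mu>) * norm (x1 - x2) + 2 * \<mu>" using nw assms(4,5) by simp
  then have "norm ((1/2) *\<^sub>R (y1 + y2)) \<le> 1 - mod_conv TYPE('a) ((1 - \<mu>) * norm (x1 - x2) + 2 * \<mu>)"
    using mod_conv_midpoint_le[OF nontriv ny] by (simp add: norm_minus_commute)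
  moreover have "y1 + y2 = (1 - \<mu>) *\<^sub>R (x1 + x2)" by (simp add: y1_def y2_def scaleR_add_right)
  then have "(1/2) *\<^sub>R (y1 + y2) = (1 - \<mu>) *\<^sub>R ((1/2) *\<^sub>R (x1 + x2))"
    by (simp add: scaleR_scaleR mult.commute)
  ultimately show ?thesis using assms(5) by simp
qed

lemma mod_conv_left_bound:
  assumes nontriv: "\<exists>u::'a::real_normed_vector. u \<noteq> 0" and "0 \<le> e1" "e1 \<le> e2" "e2 \<le> 2" "e1 < 2"
  shows "mod_conv TYPE('a) e2 - (e2 - e1) / (2 - e1) \<le> mod_conv TYPE('a) e1"
proof -
  define \<mu> where "\<mu> = (e2 - e1) / (2 - e1)"
  have \<mu>: "0 \<le> \<mu>" "\<mu> \<le> 1" "\<mu> * (2 - e1) = e2 - e1" using assms by (auto simp: \<mu>_def field_simps)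
  then have e2: "(1 - \<mu>) * e1 + 2 * \<mu> = e2" by (simp add: algebra_simps)
  have "max 0 (mod_conv TYPE('a) e2 - \<mu>) \<le> mod_conv TYPE('a) e1"
  proof (rule mod_conv_greatest[OF nontriv])
    fix x1 x2 :: 'a assume x: "norm x1 \<le> 1" "norm x2 \<le> 1" "norm (x1 - x2) = e1"
    define m where "m = norm ((1/2) *\<^sub>R (x1 + x2))"
    have "(1 - \<mu>) * m \<le> 1 - mod_conv TYPE('a) e2"
      using mod_conv_midpoint_le_stretched[OF nontriv x(1,2) \<mu>(1,2)] x(3) e2 by (simp add: m_def)
    moreover have "m \<le> 1" using norm_half_sum_le[of x1 x2] x by (simp add: m_def)
    then have "\<mu> * m \<le> \<mu>" using mult_left_le[OF _ \<mu>(1)] by blast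
    ultimately show "norm ((1/2) *\<^sub>R (x1 + x2)) + max 0 (mod_conv TYPE('a) e2 - \<mu>) \<le> 1"
      using \<open>m \<le> 1\<close> unfolding m_def[symmetric] by (auto simp: algebra_simps)
  qed (use assms in auto)
  then show ?thesis by (simp add: \<mu>_def)
qed

lemma scaled_mod_conv_left_bound:
  assumes nontriv: "\<exists>u::'a::real_normed_vector. u \<noteq> 0" and "0 \<le> e1" "e1 \<le> e2" "e2 \<le> d"
  shows "d * mod_conv TYPE('a) (e2 / d) - (e2 - e1) \<le> d * mod_conv TYPE('a) (e1 / d)"
proof (cases "e2 = 0")
  case False
  then have "d > 0" using assms by linarith
  then have "0 \<le> e1 / d" "e1 / d \<le> e2 / d" "e2 / d \<le> 1"
    using assms by (simp_all add: divide_right_mono)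
  then have "mod_conv TYPE('a) (e2 / d) - (e2 / d - e1 / d) / (2 - e1 / d) \<le> mod_conv TYPE('a) (e1 / d)"
    by (intro mod_conv_left_bound[OF nontriv]) auto
  moreover have "(e2 / d - e1 / d) / (2 - e1 / d) \<le> e2 / d - e1 / d"
  proof -
    have "1 \<le> 2 - e1 / d" "0 \<le> e2 / d - e1 / d" using \<open>e1 / d \<le> e2 / d\<close> \<open>e2 / d \<le> 1\<close> by auto
    then show ?thesis using divide_left_mono[of 1 "2 - e1 / d" "e2 / d - e1 / d"] by simp
  qed
  ultimately have "mod_conv TYPE('a) (e2 / d) - (e2 / d - e1 / d) \<le> mod_conv TYPE('a) (e1 / d)"
    by linarith
  from mult_left_mono[OF this, of d] show ?thesis
    using \<open>d > 0\<close> by (simp add: right_diff_distrib)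
qed (use assms in simp)

lemma midpoint_dist_le_mod_conv:
  fixes p1 p2 x :: "'a::real_normed_vector"
  assumes nontriv: "\<exists>u::'a. u \<noteq> 0" and "d > 0" "0 \<le> R" "R \<le> d"
    and "norm (p1 - x) \<le> R" "norm (p2 - x) \<le> R"
  shows "norm ((1/2) *\<^sub>R (p1 + p2) - x) \<le> R - d * mod_conv TYPE('a) (norm (p1 - p2) / d)"
proof -
  obtain u :: 'a where "u \<noteq> 0" using nontriv by blast
  define m where "m = (1/2) *\<^sub>R (p1 + p2)"
  define v where "v = (if m = x then sgn u else sgn (m - x))"
  have nv: "norm v = 1" using \<open>u \<noteq> 0\<close> by (auto simp: v_def norm_sgn)
  \<comment> \<open>the ball of radius d about c contains the ball of radius R about x and touches it on the far
    side of m, so the midpoint estimate in the scaled ball measures the distance of m from x\<close>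
  define c where "c = x - (d - R) *\<^sub>R v"
  have "m - c = (norm (m - x) + (d - R)) *\<^sub>R v"
    by (cases "m = x") (auto simp: c_def v_def sgn_div_norm algebra_simps)
  then have nmc: "norm (m - c) = norm (m - x) + (d - R)" using nv assms by simp
  have in_ball: "norm ((1/d) *\<^sub>R (p - c)) \<le> 1" if "norm (p - x) \<le> R" for p
  proof -
    have "p - c = (p - x) + (d - R) *\<^sub>R v" by (simp add: c_def)
    then have "norm (p - c) \<le> norm (p - x) + norm ((d - R) *\<^sub>R v)" by (metis norm_triangle_ineq)
    then have "norm (p - c) \<le> d" using that nv assms by simp
    then show ?thesis using \<open>d > 0\<close> by simp
  qed
  have "(1/d) *\<^sub>R (p1 - c) - (1/d) *\<^sub>R (p2 - c) = (1/d) *\<^sub>R (p1 - p2)"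
    by (simp add: algebra_simps)
  then have "norm ((1/2) *\<^sub>R ((1/d) *\<^sub>R (p1 - c) + (1/d) *\<^sub>R (p2 - c)))
      \<le> 1 - mod_conv TYPE('a) (norm (p1 - p2) / d)"
    using mod_conv_midpoint_le[OF nontriv in_ball in_ball] assms by simp
  moreover have "(p1 - c) + (p2 - c) = 2 *\<^sub>R (m - c)"
    by (simp add: m_def scaleR_diff_right scaleR_add_right scaleR_2)
  then have "(1/2) *\<^sub>R ((1/d) *\<^sub>R (p1 - c) + (1/d) *\<^sub>R (p2 - c)) = (1/d) *\<^sub>R (m - c)"
    by (simp flip: scaleR_add_right)
  ultimately have "norm (m - c) / d \<le> 1 - mod_conv TYPE('a) (norm (p1 - p2) / d)"
    using assms by simp
  then have "norm (m - c) \<le> d - d * mod_conv TYPE('a) (norm (p1 - p2) / d)"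
    using assms by (simp add: field_simps)
  with nmc show ?thesis by (simp add: m_def)
qed

section \<open>Modulus of nonconvexity of a bounded set\<close>

definition nonconvexity_radii :: "'a::real_normed_vector set \<Rightarrow> real \<Rightarrow> real set" where
  "nonconvexity_radii A \<tau> = {\<gamma>. \<gamma> > 0 \<and>
      (\<forall>x1\<in>A. \<forall>x2\<in>A. norm (x1 - x2) \<le> \<tau> \<longrightarrow> cball ((1/2) *\<^sub>R (x1 + x2)) \<gamma> \<inter> A \<noteq> {})}"

lemma mod_nonconv0_eq_Inf: "mod_nonconv0 A \<tau> = Inf (nonconvexity_radii A \<tau>)"
  by (simp add: mod_nonconv0_def nonconvexity_radii_def)

lemma diameter_add_one_in_nonconvexity_radii:
  fixes A :: "'a::real_normed_vector set"
  assumes "bounded A"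
  shows "diameter A + 1 \<in> nonconvexity_radii A \<tau>"
proof -
  have mem: "x1 \<in> cball ((1/2) *\<^sub>R (x1 + x2)) (diameter A + 1)" if "x1 \<in> A" "x2 \<in> A" for x1 x2
  proof -
    have "(1/2) *\<^sub>R (x1 + x2) = midpoint x1 x2" by (simp add: midpoint_def)
    then have "dist ((1/2) *\<^sub>R (x1 + x2)) x1 = dist x1 x2 / 2" by (simp add: dist_midpoint)
    moreover have "dist x1 x2 \<le> diameter A" using diameter_bounded_bound[OF assms that] .
    ultimately have "dist ((1/2) *\<^sub>R (x1 + x2)) x1 \<le> diameter A + 1"
      using zero_le_dist[of x1 x2] by linarith
    then show ?thesis by simp
  qed
  show ?thesis
    unfolding nonconvexity_radii_def mem_Collect_eq
  proof (intro conjI ballI impI)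
    show "diameter A + 1 > 0" using diameter_ge_0[OF assms] by simp
    fix x1 x2 assume "x1 \<in> A" "x2 \<in> A"
    then show "cball ((1/2) *\<^sub>R (x1 + x2)) (diameter A + 1) \<inter> A \<noteq> {}" using mem by blast
  qed
qed

lemma mod_nonconv0_nonneg:
  fixes A :: "'a::real_normed_vector set"
  assumes "bounded A"
  shows "0 \<le> mod_nonconv0 A \<tau>"
  unfolding mod_nonconv0_eq_Inf
proof (rule cInf_greatest)
  show "nonconvexity_radii A \<tau> \<noteq> {}"
    using diameter_add_one_in_nonconvexity_radii[OF assms] by blast
qed (auto simp: nonconvexity_radii_def)

lemma mod_nonconv0_mono:
  fixes A :: "'a::real_normed_vector set"
  assumes "bounded A" "\<tau>1 \<le> \<tau>2"
  shows "mod_nonconv0 A \<tau>1 \<le> mod_nonconv0 A \<tau>2"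
  unfolding mod_nonconv0_eq_Inf
proof (rule cInf_superset_mono)
  show "nonconvexity_radii A \<tau>2 \<noteq> {}"
    using diameter_add_one_in_nonconvexity_radii[OF assms(1)] by blast
  show "bdd_below (nonconvexity_radii A \<tau>1)"
    by (rule bdd_belowI[of _ 0]) (auto simp: nonconvexity_radii_def)
  show "nonconvexity_radii A \<tau>2 \<subseteq> nonconvexity_radii A \<tau>1"
    using assms(2) by (auto simp: nonconvexity_radii_def)
qed

lemma bdd_below_mod_nonconv0:
  fixes A :: "'a::real_normed_vector set"
  assumes "bounded A"
  shows "bdd_below (mod_nonconv0 A ` S)"
  using mod_nonconv0_nonneg[OF assms] by (intro bdd_belowI[of _ 0]) auto

text \<open>The limit defining mod_nonconv exists because mod_nonconv0 is monotone.\<close>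

lemma mod_nonconv_eq_Inf:
  fixes A :: "'a::real_normed_vector set"
  assumes "bounded A" "\<epsilon> > 0"
  shows "mod_nonconv A \<epsilon> = Inf (mod_nonconv0 A ` {\<epsilon><..})"
proof -
  define L where "L = Inf (mod_nonconv0 A ` {\<epsilon><..})"
  have lower: "L \<le> mod_nonconv0 A t" if "t > \<epsilon>" for t
    unfolding L_def using bdd_below_mod_nonconv0[OF assms(1)] that by (intro cINF_lower) auto
  have "(mod_nonconv0 A \<longlongrightarrow> L) (at_right \<epsilon>)"
  proof (rule order_tendstoI)
    fix y assume "y < L"
    then show "\<forall>\<^sub>F t in at_right \<epsilon>. y < mod_nonconv0 A t"
      unfolding eventually_at_right_field
      by (intro exI[of _ "\<epsilon> + 1"]) (auto intro: less_le_trans[OF _ lower])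
  next
    fix y assume "L < y"
    then obtain \<tau> where \<tau>: "\<tau> > \<epsilon>" "mod_nonconv0 A \<tau> < y"
      unfolding L_def by (auto simp: cInf_less_iff[OF _ bdd_below_mod_nonconv0[OF assms(1)]])
    moreover have "mod_nonconv0 A t < y" if "t < \<tau>" for t
      using mod_nonconv0_mono[OF assms(1), of t \<tau>] \<tau> that by linarith
    ultimately show "\<forall>\<^sub>F t in at_right \<epsilon>. mod_nonconv0 A t < y"
      unfolding eventually_at_right_field by (intro exI[of _ \<tau>]) auto
  qed
  then show ?thesis using assms(2) by (simp add: mod_nonconv_def L_def tendsto_Lim)
qed

lemma mod_nonconv_le_mod_nonconv0:
  fixes A :: "'a::real_normed_vector set"
  assumes "bounded A" "0 < \<epsilon>" "\<epsilon> < \<tau>"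
  shows "mod_nonconv A \<epsilon> \<le> mod_nonconv0 A \<tau>"
  unfolding mod_nonconv_eq_Inf[OF assms(1,2)]
  using bdd_below_mod_nonconv0[OF assms(1)] assms(3) by (intro cINF_lower) auto

lemma mod_nonconv_mono:
  fixes A :: "'a::real_normed_vector set"
  assumes "bounded A" "0 < e1" "e1 \<le> e2"
  shows "mod_nonconv A e1 \<le> mod_nonconv A e2"
  unfolding mod_nonconv_eq_Inf[OF assms(1,2)] mod_nonconv_eq_Inf[OF assms(1) less_le_trans[OF assms(2,3)]]
  using bdd_below_mod_nonconv0[OF assms(1)] assms(3) by (intro cInf_superset_mono) auto

lemma mod_nonconv0_less_right:
  fixes A :: "'a::real_normed_vector set"
  assumes "bounded A" "\<epsilon> > 0" "\<eta> > 0"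
  obtains \<tau> where "\<tau> > \<epsilon>" "mod_nonconv0 A \<tau> < mod_nonconv A \<epsilon> + \<eta>"
proof -
  have "(INF \<tau>\<in>{\<epsilon><..}. mod_nonconv0 A \<tau>) < mod_nonconv A \<epsilon> + \<eta>"
    using mod_nonconv_eq_Inf[OF assms(1,2)] assms(3) by simp
  then show ?thesis
    using cINF_less_iff[OF _ bdd_below_mod_nonconv0[OF assms(1)]] that by fastforce
qed

lemma mod_nonconv_right_bound:
  fixes A :: "'a::real_normed_vector set"
  assumes "bounded A" "\<epsilon> > 0" "\<eta> > 0"
  obtains h where "h > 0" "mod_nonconv A (\<epsilon> + h) \<le> mod_nonconv A \<epsilon> + \<eta>"
proof -
  obtain \<tau> where "\<tau> > \<epsilon>" "mod_nonconv0 A \<tau> < mod_nonconv A \<epsilon> + \<eta>"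
    using mod_nonconv0_less_right[OF assms] .
  moreover have "mod_nonconv A (\<epsilon> + (\<tau> - \<epsilon>) / 2) \<le> mod_nonconv0 A \<tau>"
    using \<open>\<tau> > \<epsilon>\<close> \<open>\<epsilon> > 0\<close> by (intro mod_nonconv_le_mod_nonconv0[OF assms(1)]) (simp_all add: field_simps)
  ultimately show ?thesis using that[of "(\<tau> - \<epsilon>) / 2"] by simp
qed

lemma mod_nonconv_near_midpoint:
  fixes A :: "'a::real_normed_vector set"
  assumes "bounded A" "p1 \<in> A" "p2 \<in> A" "p1 \<noteq> p2" "\<eta> > 0"
  obtains q where "q \<in> A" "norm (q - (1/2) *\<^sub>R (p1 + p2)) \<le> mod_nonconv A (norm (p1 - p2)) + \<eta>"
proof -
  obtain \<tau> where \<tau>: "\<tau> > norm (p1 - p2)" "Inf (nonconvexity_radii A \<tau>) < mod_nonconv A (norm (p1 - p2)) + \<eta>"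
    using mod_nonconv0_less_right[OF assms(1) _ assms(5), of "norm (p1 - p2)"] assms(4)
    by (auto simp: mod_nonconv0_eq_Inf)
  then obtain \<gamma> where "\<gamma> \<in> nonconvexity_radii A \<tau>" "\<gamma> < mod_nonconv A (norm (p1 - p2)) + \<eta>"
    using cInf_lessD diameter_add_one_in_nonconvexity_radii[OF assms(1)] by blast
  moreover from this obtain q where "q \<in> A" "dist ((1/2) *\<^sub>R (p1 + p2)) q \<le> \<gamma>"
    using assms(2,3) \<tau>(1) by (fastforce simp: nonconvexity_radii_def)
  ultimately show ?thesis by (intro that) (auto simp: dist_norm norm_minus_commute)
qed

section \<open>Nearest points under uniform well-posedness\<close>

definition nearest_point :: "'a::metric_space set \<Rightarrow> 'a \<Rightarrow> 'a" where
  "nearest_point A x = (SOME p. p \<in> A \<and> dist x p = infdist x A)"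

text \<open>Tikhonov well-posedness of best approximation from A, uniformly for x \<in> U.\<close>

definition uniformly_well_posed :: "'a::metric_space set \<Rightarrow> 'a set \<Rightarrow> bool" where
  "uniformly_well_posed A U \<longleftrightarrow> (\<forall>\<epsilon>>0. \<exists>\<eta>>0. \<forall>x\<in>U. \<forall>p\<in>A. \<forall>p'\<in>A.
      dist x p \<le> infdist x A + \<eta> \<longrightarrow> dist x p' \<le> infdist x A + \<eta> \<longrightarrow> dist p p' < \<epsilon>)"

lemma uniformly_well_posedD:
  assumes "uniformly_well_posed A U" "\<epsilon> > 0"
  obtains \<eta> where "\<eta> > 0" "\<And>x p p'. x \<in> U \<Longrightarrow> p \<in> A \<Longrightarrow> p' \<in> A \<Longrightarrow>
    dist x p \<le> infdist x A + \<eta> \<Longrightarrow> dist x p' \<le> infdist x A + \<eta> \<Longrightarrow> dist p p' < \<epsilon>"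
  using assms unfolding uniformly_well_posed_def by metis

lemma dist_less_of_infdist_less:
  assumes "A \<noteq> {}" "infdist x A < e"
  obtains q where "q \<in> A" "dist x q < e"
proof -
  have "bdd_below (dist x ` A)" by (rule bdd_belowI[of _ 0]) auto
  moreover have "(INF q\<in>A. dist x q) < e" using assms by (simp add: infdist_notempty)
  ultimately show ?thesis using cINF_less_iff[OF \<open>A \<noteq> {}\<close>] that by blast
qed

lemma uniformly_well_posed_infdist_attained:
  fixes A :: "'a::complete_space set"
  assumes wp: "uniformly_well_posed A U" and "closed A" "A \<noteq> {}" "x \<in> U"
  shows "\<exists>p\<in>A. dist x p = infdist x A"
proof -
  define S where "S n = A \<inter> cball x (infdist x A + inverse (Suc n))" for n :: nat
  obtain p where p: "\<And>n. p \<in> S n"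
  proof (rule decreasing_closed_nest[of S])
    show "closed (S n)" for n using \<open>closed A\<close> by (simp add: S_def closed_Int)
    show "S n \<noteq> {}" for n
    proof -
      have "infdist x A < infdist x A + inverse (Suc n)" by simp
      then obtain q where "q \<in> A" "dist x q < infdist x A + inverse (Suc n)"
        by (rule dist_less_of_infdist_less[OF \<open>A \<noteq> {}\<close>])
      then show ?thesis by (auto simp: S_def)
    qed
    show "S n \<subseteq> S m" if "m \<le> n" for m n
    proof -
      have "inverse (real (Suc n)) \<le> inverse (Suc m)" using that by (intro le_imp_inverse_le) auto
      then show ?thesis unfolding S_def by (intro Int_mono order_refl subset_cball) simp
    qed
    show "\<exists>n. \<forall>y\<in>S n. \<forall>z\<in>S n. dist y z < \<epsilon>" if "\<epsilon> > 0" for \<epsilon>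
    proof -
      obtain \<eta> where \<eta>: "\<eta> > 0" "\<And>x p p'. x \<in> U \<Longrightarrow> p \<in> A \<Longrightarrow> p' \<in> A \<Longrightarrow>
          dist x p \<le> infdist x A + \<eta> \<Longrightarrow> dist x p' \<le> infdist x A + \<eta> \<Longrightarrow> dist p p' < \<epsilon>"
        using uniformly_well_posedD[OF wp \<open>\<epsilon> > 0\<close>] by blast
      obtain n where "inverse (Suc n) < \<eta>" using reals_Archimedean[OF \<open>\<eta> > 0\<close>] by blast
      then have "dist y z < \<epsilon>" if "y \<in> S n" "z \<in> S n" for y z
        using \<eta>(2)[OF \<open>x \<in> U\<close>, of y z] that by (simp add: S_def)
      then show ?thesis by blast
    qed
  qed blast
  have "dist x p \<le> infdist x A"
  proof (rule field_le_epsilon)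
    fix e :: real assume "e > 0"
    then obtain n where "inverse (Suc n) < e" using reals_Archimedean by blast
    with p[of n] show "dist x p \<le> infdist x A + e" by (simp add: S_def)
  qed
  moreover have "p \<in> A" using p[of 0] by (simp add: S_def)
  ultimately show ?thesis by (metis antisym infdist_le)
qed

lemma nearest_point_exists:
  fixes A :: "'a::complete_space set"
  assumes "uniformly_well_posed A U" "closed A" "A \<noteq> {}" "x \<in> U"
  shows nearest_point_in_set: "nearest_point A x \<in> A"
    and dist_nearest_point: "dist x (nearest_point A x) = infdist x A"
proof -
  have "\<exists>p. p \<in> A \<and> dist x p = infdist x A"
    using uniformly_well_posed_infdist_attained[OF assms] by blast
  from someI_ex[OF this] show "nearest_point A x \<in> A" "dist x (nearest_point A x) = infdist x A"
    by (auto simp: nearest_point_def)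
qed

lemma continuous_on_nearest_point:
  fixes A :: "'a::complete_space set"
  assumes wp: "uniformly_well_posed A U" and "closed A" "A \<noteq> {}"
  shows "continuous_on U (nearest_point A)"
  unfolding continuous_on_iff
proof (intro ballI allI impI)
  fix x \<epsilon> assume "x \<in> U" "(\<epsilon>::real) > 0"
  obtain \<eta> where \<eta>: "\<eta> > 0" "\<And>x p p'. x \<in> U \<Longrightarrow> p \<in> A \<Longrightarrow> p' \<in> A \<Longrightarrow>
      dist x p \<le> infdist x A + \<eta> \<Longrightarrow> dist x p' \<le> infdist x A + \<eta> \<Longrightarrow> dist p p' < \<epsilon>"
    using uniformly_well_posedD[OF wp \<open>\<epsilon> > 0\<close>] by blast
  have "dist (nearest_point A y) (nearest_point A x) < \<epsilon>" if "y \<in> U" "dist y x < \<eta> / 2" for y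
  proof (rule \<eta>(2)[OF \<open>x \<in> U\<close>])
    note ny = nearest_point_exists[OF assms \<open>y \<in> U\<close>] and nx = nearest_point_exists[OF assms \<open>x \<in> U\<close>]
    show "nearest_point A y \<in> A" "nearest_point A x \<in> A" using ny nx by auto
    \<comment> \<open>the nearest point to y is an almost nearest point to x\<close>
    have "dist x (nearest_point A y) \<le> dist x y + infdist y A"
      using dist_triangle[of x "nearest_point A y" y] ny(2) by simp
    also have "\<dots> \<le> infdist x A + 2 * dist x y"
      using infdist_triangle[of y A x] by (simp add: dist_commute)
    finally show "dist x (nearest_point A y) \<le> infdist x A + \<eta>"
      using that(2) by (simp add: dist_commute)
    show "dist x (nearest_point A x) \<le> infdist x A + \<eta>" using nx(2) \<eta>(1) by simp
  qed
  then show "\<exists>\<delta>>0. \<forall>y\<in>U. dist y x < \<delta> \<longrightarrow> dist (nearest_point A y) (nearest_point A x) < \<epsilon>"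
    using \<eta>(1) by (intro exI[of _ "\<eta> / 2"]) auto
qed

lemma retract_of_uniformly_well_posed:
  fixes A :: "'a::complete_space set"
  assumes "uniformly_well_posed A U" "closed A" "A \<noteq> {}" "A \<subseteq> U"
  shows "A retract_of U"
  unfolding retract_of_def retraction_def
proof (intro exI[of _ "nearest_point A"] conjI ballI)
  show "continuous_on U (nearest_point A)"
    by (rule continuous_on_nearest_point[OF assms(1-3)])
  show "nearest_point A \<in> U \<rightarrow> A" using nearest_point_in_set[OF assms(1-3)] by blast
  fix x assume "x \<in> A"
  then show "nearest_point A x = x"
    using dist_nearest_point[OF assms(1-3), of x] nearest_point_in_set[OF assms(1-3), of x] assms(4)
    by (simp add: subset_iff)
qed (use assms in auto)

lemma cball_retract_of_UNIV:
  fixes a :: "'a::real_normed_vector"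
  assumes "r > 0"
  shows "cball a r retract_of UNIV"
  unfolding retract_of_def retraction_def
proof (intro exI[of _ "\<lambda>y. a + (r / max r (norm (y - a))) *\<^sub>R (y - a)"] conjI ballI)
  show "continuous_on UNIV (\<lambda>y. a + (r / max r (norm (y - a))) *\<^sub>R (y - a))"
    by (intro continuous_intros) (use assms in auto)
  have "r / max r (norm (y - a)) * norm (y - a) \<le> r" for y
    using assms by (simp add: field_simps)
  then show "(\<lambda>y. a + (r / max r (norm (y - a))) *\<^sub>R (y - a)) \<in> UNIV \<rightarrow> cball a r"
    using assms by (simp add: dist_norm)
  fix y assume "y \<in> cball a r"
  then show "a + (r / max r (norm (y - a))) *\<^sub>R (y - a) = y"
    using assms by (simp add: dist_norm norm_minus_commute max_def)
qed auto

section \<open>Positivity of the convexity gap\<close>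

lemma compact_pos_lower_bound:
  fixes f :: "'a::metric_space \<Rightarrow> real"
  assumes "compact S"
    and local: "\<And>x. x \<in> S \<Longrightarrow> \<exists>h>0. \<exists>c>0. \<forall>y\<in>S. dist y x < h \<longrightarrow> c \<le> f y"
  obtains \<eta> where "\<eta> > 0" "\<And>y. y \<in> S \<Longrightarrow> \<eta> \<le> f y"
proof -
  obtain h c where hc: "\<And>x. x \<in> S \<Longrightarrow> h x > 0 \<and> c x > 0 \<and> (\<forall>y\<in>S. dist y x < h x \<longrightarrow> c x \<le> f y)"
    using local by metis
  have "S \<subseteq> (\<Union>x\<in>S. ball x (h x))" using hc by force
  then obtain C where C: "C \<subseteq> S" "finite C" "S \<subseteq> (\<Union>x\<in>C. ball x (h x))"
    using compactE_image[OF assms(1), of S "\<lambda>x. ball x (h x)"] by blast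
  define \<eta> where "\<eta> = Min (insert 1 (c ` C))"
  have "\<eta> > 0" using C hc by (auto simp: \<eta>_def)
  moreover have "\<eta> \<le> f y" if y: "y \<in> S" for y
  proof -
    obtain x where "x \<in> C" "y \<in> ball x (h x)" using C(3) y by blast
    then have "dist y x < h x" by (simp add: dist_commute)
    with \<open>x \<in> C\<close> have "c x \<le> f y" using hc C(1) y by blast
    moreover have "\<eta> \<le> c x" using C(2) \<open>x \<in> C\<close> by (simp add: \<eta>_def)
    ultimately show ?thesis by simp
  qed
  ultimately show ?thesis by (rule that)
qed

locale positive_convexity_gap =
  fixes A :: "'a::real_normed_vector set" and d r :: real and a :: 'a
  assumes nontrivial: "\<exists>u::'a. u \<noteq> 0"
    and mod_nonconv_less: "\<And>\<epsilon>. 0 < \<epsilon> \<Longrightarrow> \<epsilon> < 2 * d \<Longrightarrow> mod_nonconv A \<epsilon> < d * mod_conv TYPE('a) (\<epsilon> / d)"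
    and r_pos: "r > 0" and subset_cball: "A \<subseteq> cball a r" and ball_diameter_less: "2 * r < d"
begin

definition gap :: "real \<Rightarrow> real" where
  "gap \<epsilon> = d * mod_conv TYPE('a) (\<epsilon> / d) - mod_nonconv A \<epsilon>"

lemma d_pos: "d > 0"
  using r_pos ball_diameter_less by linarith

lemma bounded_A: "bounded A"
  using subset_cball bounded_cball bounded_subset by blast

lemma dist_le_2r:
  assumes "p \<in> A" "q \<in> A"
  shows "dist p q \<le> 2 * r"
proof -
  have "dist a p \<le> r" "dist a q \<le> r" using assms subset_cball by auto
  then show ?thesis using dist_triangle3[of p q a] by linarith
qed

lemma infdist_le_2r: "x \<in> cball a r \<Longrightarrow> infdist x A \<le> 2 * r"
proof (cases "A = {}")
  case False
  assume "x \<in> cball a r"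
  obtain p where "p \<in> A" using False by blast
  then have "dist x p \<le> 2 * r" using subset_cball \<open>x \<in> cball a r\<close> dist_triangle3[of x p a] by force
  then show ?thesis using infdist_le2[OF \<open>p \<in> A\<close>] by blast
qed (use r_pos in \<open>simp add: infdist_def\<close>)

lemma gap_pos: "0 < \<epsilon> \<Longrightarrow> \<epsilon> \<le> 2 * r \<Longrightarrow> gap \<epsilon> > 0"
  using mod_nonconv_less ball_diameter_less by (simp add: gap_def)

text \<open>The gap is lower semicontinuous: from the right because mod_conv is monotone and mod_nonconv
  right-continuous in the sense of mod_nonconv_right_bound, from the left because mod_nonconv is
  monotone and mod_conv cannot drop faster than linearly.\<close>

lemma gap_locally_ge_half:
  assumes "0 < \<epsilon>0" "\<epsilon>0 \<le> es" "es \<le> 2 * r"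
  obtains h where "h > 0" "\<And>e. \<epsilon>0 \<le> e \<Longrightarrow> e \<le> 2 * r \<Longrightarrow> dist e es < h \<Longrightarrow> gap es / 2 \<le> gap e"
proof -
  define c where "c = gap es"
  have "c > 0" unfolding c_def using assms by (intro gap_pos) auto
  have c_eq: "c = d * mod_conv TYPE('a) (es / d) - mod_nonconv A es" by (simp add: c_def gap_def)
  obtain h1 where h1: "h1 > 0" "mod_nonconv A (es + h1) \<le> mod_nonconv A es + c / 4"
    using mod_nonconv_right_bound[OF bounded_A, of es "c / 4"] assms \<open>c > 0\<close> by auto
  define h where "h = min h1 (c / 4)"
  have "c / 2 \<le> gap e" if e: "\<epsilon>0 \<le> e" "e \<le> 2 * r" "dist e es < h" for e
  proof (cases "es \<le> e")
    case True
    have "mod_conv TYPE('a) (es / d) \<le> mod_conv TYPE('a) (e / d)"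
      using True assms e d_pos ball_diameter_less by (intro mod_conv_mono[OF nontrivial]) (auto simp: field_simps)
    then have "d * mod_conv TYPE('a) (es / d) \<le> d * mod_conv TYPE('a) (e / d)"
      using d_pos by simp
    moreover have "mod_nonconv A e \<le> mod_nonconv A (es + h1)"
      using True assms e by (intro mod_nonconv_mono[OF bounded_A]) (auto simp: h_def dist_real_def)
    ultimately show ?thesis using h1 c_eq \<open>c > 0\<close> unfolding gap_def by linarith
  next
    case False
    have "d * mod_conv TYPE('a) (es / d) - (es - e) \<le> d * mod_conv TYPE('a) (e / d)"
      using False assms e ball_diameter_less by (intro scaled_mod_conv_left_bound[OF nontrivial]) auto
    moreover have "es - e < c / 4" using False e by (auto simp: h_def dist_real_def)
    moreover have "mod_nonconv A e \<le> mod_nonconv A es"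
      using False assms e by (intro mod_nonconv_mono[OF bounded_A]) auto
    ultimately show ?thesis using c_eq \<open>c > 0\<close> unfolding gap_def by linarith
  qed
  moreover have "h > 0" using h1 \<open>c > 0\<close> by (simp add: h_def)
  ultimately show ?thesis using that unfolding c_def by blast
qed

lemma gap_uniformly_pos:
  assumes "0 < \<epsilon>0" "\<epsilon>0 \<le> 2 * r"
  obtains \<eta> where "\<eta> > 0" "\<And>e. \<epsilon>0 \<le> e \<Longrightarrow> e \<le> 2 * r \<Longrightarrow> \<eta> \<le> gap e"
proof (rule compact_pos_lower_bound[of "{\<epsilon>0..2 * r}" gap])
  fix es assume "es \<in> {\<epsilon>0..2 * r}"
  then obtain h where "h > 0" "\<And>e. \<epsilon>0 \<le> e \<Longrightarrow> e \<le> 2 * r \<Longrightarrow> dist e es < h \<Longrightarrow> gap es / 2 \<le> gap e"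
    using gap_locally_ge_half assms by auto
  moreover have "gap es / 2 > 0" using \<open>es \<in> {\<epsilon>0..2 * r}\<close> assms gap_pos by auto
  ultimately show "\<exists>h>0. \<exists>c>0. \<forall>y\<in>{\<epsilon>0..2 * r}. dist y es < h \<longrightarrow> c \<le> gap y"
    by (intro exI[of _ h] exI[of _ "gap es / 2"] conjI ballI impI) auto
qed (use that in auto)

lemma gap_le_excess:
  assumes "p \<in> A" "p' \<in> A" "p \<noteq> p'" "dist x p \<le> R" "dist x p' \<le> R" "R \<le> d"
  shows "gap (dist p p') \<le> R - infdist x A"
proof -
  define m where "m = (1/2) *\<^sub>R (p + p')"
  have "0 \<le> R" using assms(4) zero_le_dist[of x p] by linarith
  then have m: "norm (m - x) \<le> R - d * mod_conv TYPE('a) (dist p p' / d)"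
    unfolding m_def dist_norm using assms d_pos
    by (intro midpoint_dist_le_mod_conv[OF nontrivial]) (auto simp: dist_norm norm_minus_commute)
  have "d * mod_conv TYPE('a) (dist p p' / d) - mod_nonconv A (dist p p') \<le> R - infdist x A + \<eta>"
    if "\<eta> > 0" for \<eta>
  proof -
    obtain q where q: "q \<in> A" "norm (q - m) \<le> mod_nonconv A (dist p p') + \<eta>"
      using mod_nonconv_near_midpoint[OF bounded_A assms(1-3) \<open>\<eta> > 0\<close>] unfolding m_def dist_norm by blast
    have "infdist x A \<le> dist x q" using q(1) by (rule infdist_le)
    also have "\<dots> \<le> norm (m - x) + norm (q - m)"
      using norm_triangle_ineq[of "m - x" "q - m"] by (simp add: dist_norm norm_minus_commute)
    finally show ?thesis using m q(2) by linarith
  qed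
  then show ?thesis unfolding gap_def by (rule field_le_epsilon)
qed

lemma uniformly_well_posed_cball: "uniformly_well_posed A (cball a r)"
  unfolding uniformly_well_posed_def
proof (intro allI impI)
  fix \<epsilon> :: real assume "\<epsilon> > 0"
  define \<epsilon>' where "\<epsilon>' = min \<epsilon> (2 * r)"
  have "0 < \<epsilon>'" "\<epsilon>' \<le> 2 * r" using \<open>\<epsilon> > 0\<close> r_pos by (auto simp: \<epsilon>'_def)
  then obtain \<eta> where \<eta>: "\<eta> > 0" "\<And>e. \<epsilon>' \<le> e \<Longrightarrow> e \<le> 2 * r \<Longrightarrow> \<eta> \<le> gap e"
    using gap_uniformly_pos by blast
  define \<eta>' where "\<eta>' = min \<eta> (d - 2 * r) / 2"
  have "\<eta>' > 0" "\<eta>' < \<eta>" "\<eta>' < d - 2 * r"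
    using \<eta>(1) ball_diameter_less by (auto simp: \<eta>'_def)
  moreover have "dist p p' < \<epsilon>"
    if "x \<in> cball a r" "p \<in> A" "p' \<in> A" "dist x p \<le> infdist x A + \<eta>'" "dist x p' \<le> infdist x A + \<eta>'"
    for x p p'
  proof (rule ccontr)
    assume "\<not> dist p p' < \<epsilon>"
    then have "\<epsilon>' \<le> dist p p'" "p \<noteq> p'" using \<open>\<epsilon> > 0\<close> by (auto simp: \<epsilon>'_def)
    moreover have "infdist x A + \<eta>' \<le> d"
      using infdist_le_2r[OF that(1)] \<open>\<eta>' < d - 2 * r\<close> by linarith
    ultimately have "gap (dist p p') \<le> \<eta>'"
      using gap_le_excess[OF that(2,3) _ that(4,5)] by simp
    moreover have "\<eta> \<le> gap (dist p p')"
      using \<eta>(2) \<open>\<epsilon>' \<le> dist p p'\<close> dist_le_2r[OF that(2,3)] by blast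
    ultimately show False using \<open>\<eta>' < \<eta>\<close> by linarith
  qed
  ultimately show "\<exists>\<eta>>0. \<forall>x\<in>cball a r. \<forall>p\<in>A. \<forall>p'\<in>A. dist x p \<le> infdist x A + \<eta> \<longrightarrow>
      dist x p' \<le> infdist x A + \<eta> \<longrightarrow> dist p p' < \<epsilon>"
    by blast
qed

end

theorem theorem3p4:
  fixes A :: "'a::banach set" and d r :: real and a :: 'a
  assumes "uniformly_convex_space TYPE('a)"
    and "d > 0"
    and "closed A" and "A \<noteq> {}"
    and "weakly_convex_on A (2 * d)"
    and "\<forall>\<epsilon>. 0 < \<epsilon> \<and> \<epsilon> < 2 * d \<longrightarrow> d * mod_conv TYPE('a) (\<epsilon> / d) > mod_nonconv A \<epsilon>"
    and "condition_i (\<lambda>t. d * mod_conv TYPE('a) (t / d)) (mod_nonconv A) (2 * d)"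
    and "r > 0" and "A \<subseteq> cball a r" and "2 * r < d"
    and "\<forall>\<epsilon>. 0 < \<epsilon> \<and> \<epsilon> < diameter A \<longrightarrow> mod_nonconv A \<epsilon> < d * mod_conv TYPE('a) (\<epsilon> / d)"
  shows "\<exists>\<phi>. continuous_on UNIV \<phi> \<and> \<phi> ` UNIV \<subseteq> A \<and> (\<forall>x\<in>A. \<phi> x = x)"
  \<comment> \<open>Only the strict inequality between the moduli on (0, 2d) is used. In the zero space mod_conv is the supremum of an unbounded set,
    so that case is treated separately.\<close>
proof (cases "\<exists>u::'a. u \<noteq> 0")
  case False
  have "x \<in> A" for x :: 'a
  proof -
    obtain p where "p \<in> A" using \<open>A \<noteq> {}\<close> by blast
    moreover have "x = 0" "p = 0" using False by blast+
    ultimately show ?thesis by simp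
  qed
  then have "A = UNIV" by blast
  then show ?thesis by (intro exI[of _ id]) auto
next
  case True
  interpret positive_convexity_gap A d r a
    using True assms by unfold_locales auto
  have "A retract_of cball a r"
    using uniformly_well_posed_cball \<open>closed A\<close> \<open>A \<noteq> {}\<close> \<open>A \<subseteq> cball a r\<close>
    by (rule retract_of_uniformly_well_posed)
  also have "cball a r retract_of UNIV" using \<open>r > 0\<close> by (rule cball_retract_of_UNIV)
  finally show ?thesis by (auto simp: retract_of_def retraction_def)
qed

end
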